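(* Let $q:\mathcal D\to\mathbb R$ be a query on a domain $\mathcal D$ of databases equipped with a neighboring relation, and let $u$ be a cost function that is symmetric in the noise, i.e. $u(q(D)+x,q(D))=u(q(D)-x,q(D))$ for all $D\in\mathcal D$ and $x\in\mathbb R$. Let $\varepsilon,\delta>0$. If $p$ is a noise distribution such that the additive noise mechanism $M_q(D;p)$ is $(\varepsilon,\delta)$-ADP, then there exists a symmetric noise distribution $\hat p$ (i.e. $\hat p(S)=\hat p(-S)$ for every measurable $S\subseteq\mathbb R$) such that $M_q(D;\hat p)$ is $(\varepsilon,\delta)$-ADP and $U(p;u,M_q,\mathcal D)=U(\hat p;u,M_q,\mathcal D)$.
   Context: A noise distribution $p$ is a probability distribution on $\mathbb R$. The additive noise mechanism is $M_q(D;p)=q(D)+x$ with $x\sim p$; with $x$ fixed, $M_q(D;x)=q(D)+x$. A randomized mechanism $M$ is $(\varepsilon,\delta)$-approximately differentially private ($(\varepsilon,\delta)$-ADP) if for all measurable sets $S$ of outputs and all neighboring $D_0,D_1\in\mathcal D$: $\Pr[M(D_0)\in S]\le e^{\varepsilon}\Pr[M(D_1)\in S]+\delta$. For a cost function $u:\mathbb R\times\mathbb R\to\mathbb R$, the utility-loss is $U(p;u,M_q,\mathcal D)=\sup_{D\in\mathcal D}\int u(M_q(D;x),q(D))\,p(x)\,dx$. For a set $S$, $-S=\{-s: s\in S\}$. *)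

theory Defs
  imports "HOL-Probability.Probability"
begin

definition noise_distribution :: "real measure \<Rightarrow> bool" where
  "noise_distribution p \<longleftrightarrow> prob_space p \<and> sets p = sets borel"

definition additive_mech :: "('d \<Rightarrow> real) \<Rightarrow> real measure \<Rightarrow> 'd \<Rightarrow> real measure" where
  "additive_mech q p D = distr p borel (\<lambda>x. q D + x)"

definition ADP :: "('d \<Rightarrow> 'd \<Rightarrow> bool) \<Rightarrow> ('d \<Rightarrow> real measure) \<Rightarrow> real \<Rightarrow> real \<Rightarrow> bool" where
  "ADP nbr M \<epsilon> \<delta> \<longleftrightarrow>
     (\<forall>D0 D1 S. nbr D0 D1 \<longrightarrow> S \<in> sets borel \<longrightarrow>
        measure (M D0) S \<le> exp \<epsilon> * measure (M D1) S + \<delta>)"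

definition utility_loss :: "real measure \<Rightarrow> (real \<Rightarrow> real \<Rightarrow> real) \<Rightarrow> ('d \<Rightarrow> real) \<Rightarrow> ereal" where
  "utility_loss p u q = (SUP D. ereal (\<integral>x. u (q D + x) (q D) \<partial>p))"

definition symmetric_noise :: "real measure \<Rightarrow> bool" where
  "symmetric_noise p \<longleftrightarrow> (\<forall>S \<in> sets borel. measure p S = measure p (uminus ` S))"

end

(*
  Reflecting the noise preserves (\<epsilon>, \<delta>)-ADP: the output q D - x lies in S exactly when
  q D' + x lies in the reflection of S about (q D + q D') / 2, so the ADP inequality for the
  reflected noise at (D0, D1, S) is the one for the original noise at (D1, D0, reflected S);
  this is where the symmetry of the neighbouring relation enters. The ADP inequality is affine
  in the noise distribution, hence it also holds for the symmetric mixture (p + reflect p) / 2.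
  A cost that is even in the noise has the same expectation under p and under reflect p, hence
  under the mixture.
*)

theory Submission
  imports Defs
begin

definition half_mixture :: "'a measure \<Rightarrow> 'a measure \<Rightarrow> 'a measure" where
  "half_mixture M N = measure_pmf (bernoulli_pmf (1/2)) \<bind> (\<lambda>b. if b then M else N)"

definition reflect :: "real measure \<Rightarrow> real measure" where
  "reflect p = distr p borel uminus"

abbreviation symmetrization :: "real measure \<Rightarrow> real measure" where
  "symmetrization p \<equiv> half_mixture p (reflect p)"

lemma half_mixture_kernel_measurable:
  assumes "prob_space M" "prob_space N" "sets N = sets M"
  shows "(\<lambda>b. if b then M else N) \<in> measurable (measure_pmf (bernoulli_pmf (1/2))) (subprob_algebra M)"
  using assms by (auto simp: space_subprob_algebra prob_space_imp_subprob_space)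

lemma
  assumes "prob_space M" "prob_space N" "sets N = sets M"
  shows prob_space_half_mixture: "prob_space (half_mixture M N)"
    and sets_half_mixture: "sets (half_mixture M N) = sets M"
  using prob_space.prob_space_bind[OF prob_space_measure_pmf _ half_mixture_kernel_measurable[OF assms]]
    sets_bind_measurable[OF half_mixture_kernel_measurable[OF assms]] assms
  by (auto simp: half_mixture_def)

lemma nn_integral_half_mixture:
  assumes MN: "prob_space M" "prob_space N" "sets N = sets M" and f: "f \<in> borel_measurable M"
  shows "(\<integral>\<^sup>+x. f x \<partial>half_mixture M N) = ((\<integral>\<^sup>+x. f x \<partial>M) + (\<integral>\<^sup>+x. f x \<partial>N)) / 2"
  unfolding half_mixture_def
  by (simp add: nn_integral_bind[OF f half_mixture_kernel_measurable[OF MN]]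
      nn_integral_measure_pmf nn_integral_count_space_finite UNIV_bool
      divide_ennreal_def algebra_simps)

lemma emeasure_half_mixture:
  assumes MN: "prob_space M" "prob_space N" "sets N = sets M" and A: "A \<in> sets M"
  shows "emeasure (half_mixture M N) A = (emeasure M A + emeasure N A) / 2"
  unfolding half_mixture_def
  using A MN(3)
  by (simp add: emeasure_bind[OF _ half_mixture_kernel_measurable[OF MN]]
      nn_integral_measure_pmf nn_integral_count_space_finite UNIV_bool
      divide_ennreal_def algebra_simps)

lemma measure_half_mixture:
  assumes MN: "prob_space M" "prob_space N" "sets N = sets M" and A: "A \<in> sets M"
  shows "measure (half_mixture M N) A = (measure M A + measure N A) / 2"
proof -
  have "emeasure (half_mixture M N) A = ennreal ((measure M A + measure N A) / 2)"
    using emeasure_half_mixture[OF MN A]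
      finite_measure.emeasure_eq_measure[OF prob_space.finite_measure[OF MN(1)]]
      finite_measure.emeasure_eq_measure[OF prob_space.finite_measure[OF MN(2)]]
    by (simp add: ennreal_divide_numeral flip: ennreal_plus)
  then show ?thesis
    by (simp add: measure_def)
qed

lemma noise_distribution_half_mixture:
  assumes "noise_distribution M" "noise_distribution N"
  shows "noise_distribution (half_mixture M N)"
proof -
  have MN: "prob_space M" "prob_space N" "sets N = sets M" and "sets M = sets borel"
    using assms by (auto simp: noise_distribution_def)
  then show ?thesis
    using prob_space_half_mixture[OF MN] sets_half_mixture[OF MN] by (simp add: noise_distribution_def)
qed

lemma noise_distribution_reflect:
  assumes "noise_distribution p"
  shows "noise_distribution (reflect p)"
proof -
  have "prob_space p" and sp: "sets p = sets borel"
    using assms by (auto simp: noise_distribution_def)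
  then show ?thesis
    using prob_space.prob_space_distr[of p uminus borel]
    by (simp add: noise_distribution_def reflect_def measurable_cong_sets[OF sp refl])
qed

lemma measure_reflect:
  assumes p: "noise_distribution p" and A: "A \<in> sets borel"
  shows "measure (reflect p) A = measure p (uminus -` A)"
proof -
  have sp: "sets p = sets borel" using p by (simp add: noise_distribution_def)
  show ?thesis
    unfolding reflect_def
    using A sets_eq_imp_space_eq[OF sp] by (simp add: measure_distr measurable_cong_sets[OF sp refl])
qed

lemma nn_integral_reflect_even:
  assumes p: "noise_distribution p" and g: "g \<in> borel_measurable borel" and even: "\<And>x. g (- x) = g x"
  shows "(\<integral>\<^sup>+x. g x \<partial>reflect p) = (\<integral>\<^sup>+x. g x \<partial>p)"
proof -
  have sp: "sets p = sets borel" using p by (simp add: noise_distribution_def)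
  show ?thesis
    unfolding reflect_def using g even by (simp add: nn_integral_distr measurable_cong_sets[OF sp refl])
qed

lemma nn_integral_symmetrization_even:
  assumes p: "noise_distribution p" and g: "g \<in> borel_measurable borel" and even: "\<And>x. g (- x) = g x"
  shows "(\<integral>\<^sup>+x. g x \<partial>symmetrization p) = (\<integral>\<^sup>+x. g x \<partial>p)"
proof -
  have MN: "prob_space p" "prob_space (reflect p)" "sets (reflect p) = sets p" and sp: "sets p = sets borel"
    using p noise_distribution_reflect[OF p] by (auto simp: noise_distribution_def)
  have "g \<in> borel_measurable p"
    using g by (simp add: measurable_cong_sets[OF sp refl])
  then have "(\<integral>\<^sup>+x. g x \<partial>symmetrization p) = ((\<integral>\<^sup>+x. g x \<partial>p) + (\<integral>\<^sup>+x. g x \<partial>p)) / 2"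
    by (simp only: nn_integral_half_mixture[OF MN] nn_integral_reflect_even[of p g, OF p g even])
  also have "\<dots> = (\<integral>\<^sup>+x. g x \<partial>p)"
    by (simp add: ennreal_mult_divide_eq flip: mult_2_right)
  finally show ?thesis .
qed

lemma real_integral_eq_of_nn_integral_eq:
  fixes f :: "'a \<Rightarrow> real"
  assumes sets: "sets N = sets M"
    and pos: "f \<in> borel_measurable M \<Longrightarrow> (\<integral>\<^sup>+x. ennreal (f x) \<partial>M) = (\<integral>\<^sup>+x. ennreal (f x) \<partial>N)"
    and neg: "f \<in> borel_measurable M \<Longrightarrow> (\<integral>\<^sup>+x. ennreal (- f x) \<partial>M) = (\<integral>\<^sup>+x. ennreal (- f x) \<partial>N)"
  shows "(\<integral>x. f x \<partial>M) = (\<integral>x. f x \<partial>N)"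
proof (cases "f \<in> borel_measurable M")
  case True
  then have "integrable M f \<longleftrightarrow> integrable N f"
    using pos neg by (simp add: real_integrable_def measurable_cong_sets[OF sets refl])
  then show ?thesis
    using True pos neg by (cases "integrable M f") (simp_all add: real_lebesgue_integral_def not_integrable_integral_eq)
next
  case False
  then have "\<not> integrable M f" "\<not> integrable N f"
    by (auto dest: borel_measurable_integrable simp: measurable_cong_sets[OF sets refl])
  then show ?thesis
    by (simp add: not_integrable_integral_eq)
qed

lemma integral_symmetrization_even:
  fixes f :: "real \<Rightarrow> real"
  assumes p: "noise_distribution p" and even: "\<And>x. f (- x) = f x"
  shows "(\<integral>x. f x \<partial>symmetrization p) = (\<integral>x. f x \<partial>p)"
proof (rule real_integral_eq_of_nn_integral_eq)
  have hm: "sets (symmetrization p) = sets borel" and "sets p = sets borel"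
    using p noise_distribution_half_mixture[OF p noise_distribution_reflect[OF p]]
    by (auto simp: noise_distribution_def)
  then show "sets p = sets (symmetrization p)"
    by simp
  have nn: "(\<integral>\<^sup>+x. ennreal (h x) \<partial>symmetrization p) = (\<integral>\<^sup>+x. ennreal (h x) \<partial>p)"
    if "h \<in> borel_measurable borel" "\<And>x. h (- x) = h x" for h :: "real \<Rightarrow> real"
    using that by (intro nn_integral_symmetrization_even[OF p]) auto
  show "(\<integral>\<^sup>+x. ennreal (f x) \<partial>symmetrization p) = (\<integral>\<^sup>+x. ennreal (f x) \<partial>p)"
    and "(\<integral>\<^sup>+x. ennreal (- f x) \<partial>symmetrization p) = (\<integral>\<^sup>+x. ennreal (- f x) \<partial>p)"
    if "f \<in> borel_measurable (symmetrization p)"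
    using that even by (auto intro!: nn simp: measurable_cong_sets[OF hm refl])
qed

lemma symmetric_noise_symmetrization:
  assumes p: "noise_distribution p"
  shows "symmetric_noise (symmetrization p)"
  unfolding symmetric_noise_def
proof
  fix S :: "real set" assume S: "S \<in> sets borel"
  have MN: "prob_space p" "prob_space (reflect p)" "sets (reflect p) = sets p" "sets p = sets borel"
    using p noise_distribution_reflect[OF p] by (auto simp: noise_distribution_def)
  have "uminus ` S = uminus -` S" by force
  moreover have "uminus -` S \<in> sets borel"
    using measurable_sets_borel[OF borel_measurable_uminus[OF measurable_ident_sets] S] by simp
  ultimately show "measure (symmetrization p) S = measure (symmetrization p) (uminus ` S)"
    using S by (simp add: measure_half_mixture[OF MN(1-3)] measure_reflect[OF p] MN(4) vimage_comp)
qed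

lemma measure_additive_mech:
  assumes p: "noise_distribution p" and S: "S \<in> sets borel"
  shows "measure (additive_mech q p D) S = measure p {x. q D + x \<in> S}"
proof -
  have sp: "sets p = sets borel" using p by (simp add: noise_distribution_def)
  show ?thesis
    unfolding additive_mech_def using S sets_eq_imp_space_eq[OF sp]
    by (simp add: measure_distr measurable_cong_sets[OF sp refl] vimage_def)
qed

lemma ADP_additive_mech_half_mixture:
  assumes M: "noise_distribution M" and N: "noise_distribution N"
    and "ADP nbr (additive_mech q M) \<epsilon> \<delta>" "ADP nbr (additive_mech q N) \<epsilon> \<delta>"
  shows "ADP nbr (additive_mech q (half_mixture M N)) \<epsilon> \<delta>"
  unfolding ADP_def
proof (intro allI impI)
  fix D0 D1 S assume nbr: "nbr D0 D1" and S: "S \<in> sets (borel :: real measure)"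
  have MN: "prob_space M" "prob_space N" "sets N = sets M" "sets M = sets borel"
    using M N by (auto simp: noise_distribution_def)
  have "{x. q D + x \<in> S} \<in> sets borel" for D
    using S by measurable
  then have mix: "measure (additive_mech q (half_mixture M N) D) S
      = (measure (additive_mech q M D) S + measure (additive_mech q N D) S) / 2" for D
    using S by (simp add: measure_additive_mech noise_distribution_half_mixture M N
        measure_half_mixture[OF MN(1-3)] MN(4))
  have "measure (additive_mech q M D0) S \<le> exp \<epsilon> * measure (additive_mech q M D1) S + \<delta>"
    "measure (additive_mech q N D0) S \<le> exp \<epsilon> * measure (additive_mech q N D1) S + \<delta>"
    using assms(3,4) nbr S unfolding ADP_def by blast+
  then show "measure (additive_mech q (half_mixture M N) D0) S
      \<le> exp \<epsilon> * measure (additive_mech q (half_mixture M N) D1) S + \<delta>"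
    unfolding mix by (simp add: field_simps)
qed

lemma measure_additive_mech_reflect:
  assumes p: "noise_distribution p" and S: "S \<in> sets borel"
  shows "measure (additive_mech q (reflect p) D) S = measure p {x. q D - x \<in> S}"
proof -
  have "{x. q D + x \<in> S} \<in> sets borel"
    using S by measurable
  then show ?thesis
    using S by (simp add: measure_additive_mech noise_distribution_reflect measure_reflect p vimage_def)
qed

lemma ADP_additive_mech_reflect:
  assumes p: "noise_distribution p" and nbr_sym: "symp nbr"
    and adp: "ADP nbr (additive_mech q p) \<epsilon> \<delta>"
  shows "ADP nbr (additive_mech q (reflect p)) \<epsilon> \<delta>"
  unfolding ADP_def
proof (intro allI impI)
  fix D0 D1 S assume nbr: "nbr D0 D1" and S: "S \<in> sets (borel :: real measure)"
  define S' where "S' = {y. q D0 + q D1 - y \<in> S}"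
  have "S' \<in> sets borel"
    unfolding S'_def using S by measurable
  moreover have "{x. q D1 + x \<in> S'} = {x. q D0 - x \<in> S}" "{x. q D0 + x \<in> S'} = {x. q D1 - x \<in> S}"
    by (auto simp: S'_def algebra_simps)
  ultimately have "measure p {x. q D0 - x \<in> S} \<le> exp \<epsilon> * measure p {x. q D1 - x \<in> S} + \<delta>"
    using adp nbr_sym nbr by (metis ADP_def measure_additive_mech[OF p] sympD)
  then show "measure (additive_mech q (reflect p) D0) S \<le> exp \<epsilon> * measure (additive_mech q (reflect p) D1) S + \<delta>"
    using S by (simp add: measure_additive_mech_reflect[OF p])
qed

lemma utility_loss_symmetrization:
  assumes p: "noise_distribution p" and u_sym: "\<And>D x. u (q D + x) (q D) = u (q D - x) (q D)"
  shows "utility_loss (symmetrization p) u q = utility_loss p u q"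
  unfolding utility_loss_def
  using u_sym by (simp add: integral_symmetrization_even[OF p])

theorem lemma2:
  fixes q :: "'d \<Rightarrow> real" and nbr :: "'d \<Rightarrow> 'd \<Rightarrow> bool"
    and u :: "real \<Rightarrow> real \<Rightarrow> real" and p :: "real measure"
    and \<epsilon> \<delta> :: real
  assumes u_sym: "\<And>D x. u (q D + x) (q D) = u (q D - x) (q D)"
    and nbr_sym: "symp nbr"
    and eps: "\<epsilon> > 0" and delta: "\<delta> > 0"
    and p: "noise_distribution p"
    and adp: "ADP nbr (additive_mech q p) \<epsilon> \<delta>"
  shows "\<exists>p'. noise_distribution p' \<and> symmetric_noise p'
           \<and> ADP nbr (additive_mech q p') \<epsilon> \<delta>
           \<and> utility_loss p u q = utility_loss p' u q"
proof (intro exI conjI)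
  show "noise_distribution (symmetrization p)"
    using p by (simp add: noise_distribution_half_mixture noise_distribution_reflect)
  show "symmetric_noise (symmetrization p)"
    using p by (rule symmetric_noise_symmetrization)
  show "ADP nbr (additive_mech q (symmetrization p)) \<epsilon> \<delta>"
    using ADP_additive_mech_half_mixture[OF p noise_distribution_reflect[OF p]
        adp ADP_additive_mech_reflect[OF p nbr_sym adp]] .
  show "utility_loss p u q = utility_loss (symmetrization p) u q"
    using utility_loss_symmetrization[of p u q, OF p u_sym] by simp
qed

end
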